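(* \[ \mathbf{E}[1/p_r] = \begin{cases} \frac{3\sqrt{2}+5}{12p_i} & p_i \in (1/2, \frac{1+\sqrt{2}}{4}] \\ \frac{3+2\sqrt{2}}{6p_i} & p_i \in (\frac{1+\sqrt{2}}{4}, \frac{2+\sqrt{2}}{4}] \\ \frac{3\sqrt{2}+5}{6p_i} & p_i \in (\frac{2+\sqrt{2}}{4}, 1] \end{cases}, \qquad \mathbf{E}\left[1/p_r^2\right] = \begin{cases} \frac{5(3+2\sqrt{2})}{48p^2_i} & p_i \in (1/2, \frac{1+\sqrt{2}}{4}] \\ \frac{3+2\sqrt{2}}{6p^2_i} & p_i \in (\frac{1+\sqrt{2}}{4}, \frac{2+\sqrt{2}}{4}] \\ \frac{5(3+2\sqrt{2})}{12p^2_i} & p_i \in (\frac{2+\sqrt{2}}{4}, 1] \end{cases}. \]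
   Context: $\lg=\log_2$, and for real $x>0$, $p_x = x/2^{\lceil \lg x\rceil}$. In 2Merge$(A,B,T)$ with $T=(t_1,\dots,t_{i-2})$ sorted, $i$ even, $i\ge4$, after ensuring $A<B$, Step 2 compares $A$ with $t_{\lceil(1-2^{-r/2})i\rceil}$ for $r=1,2,\dots$ up to $2\lg i$ and stops at the first $r$ with $A<t_{\lceil(1-2^{-r/2})i\rceil}$; $r$ is this number of comparisons. The inserted elements are in uniformly random distinct positions, so given $A<B$, $\mathbf{Pr}[t_{\ell-1}<A<t_\ell]=(i-\ell)/\binom{i}{2}$, and $\mathbf{Pr}[r]=2^{-r}\pm O\!\left(\frac{1}{2^{r/2}i}\right)$. Define $w_r := (\sqrt{2}-1)2^{-r/2}i$ and $p_r := p_{w_r} = w_r/2^{\lceil\lg w_r\rceil}$. Expectations are over $r$. *)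

theory Defs
  imports Complex_Main
begin

definition pnorm :: "real \<Rightarrow> real" where
  "pnorm x = x / 2 powr (real_of_int \<lceil>log 2 x\<rceil>)"

definition wr :: "nat \<Rightarrow> nat \<Rightarrow> real" where
  "wr i r = (sqrt 2 - 1) * 2 powr (- real r / 2) * real i"

definition pr :: "nat \<Rightarrow> nat \<Rightarrow> real" where
  "pr i r = pnorm (wr i r)"

text \<open>Expectation over r = 1,2,... with Pr[r] = 2^(-r).\<close>
definition Er :: "(nat \<Rightarrow> real) \<Rightarrow> real" where
  "Er f = (\<Sum>r. (1/2) ^ (Suc r) * f (Suc r))"

end

theory Submission
  imports Defs
begin

text \<open>
  Since pnorm is invariant under multiplication by integer powers of 2 and the exponent
  of 2 in w_r drops by 1/2 with each step of r, p_r depends only on the parity of r: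
  it is the pnorm of (2 - sqrt 2) p_i for odd r and of (sqrt 2 - 1) p_i for even r.
  Both numbers lie in (1/8, 1], so their pnorms are p_i times explicit constants, the
  thresholds (1 + sqrt 2)/4 and (2 + sqrt 2)/4 deciding how often they must be doubled.
  The expectation of a function of period 2 in r under Pr[r] = 2^-r is then a sum of two
  geometric series.
\<close>

lemma pnorm_mult_2_powr_int:
  assumes "x > 0"
  shows "pnorm (x * 2 powr real_of_int n) = pnorm x"
proof -
  have "log 2 (x * 2 powr real_of_int n) = log 2 x + real_of_int n"
    using assms by (simp add: log_mult)
  then have "\<lceil>log 2 (x * 2 powr real_of_int n)\<rceil> = \<lceil>log 2 x\<rceil> + n"
    by (metis ceiling_add_of_int)
  then show ?thesis
    by (simp add: pnorm_def powr_add)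
qed

lemma pnorm_bounds:
  assumes "x > 0"
  shows "1/2 < pnorm x" "pnorm x \<le> 1"
proof -
  define c where "c = \<lceil>log 2 x\<rceil>"
  have "log 2 x \<le> c" "c - 1 < log 2 x"
    unfolding c_def by linarith+
  then have "x \<le> 2 powr c" "2 powr (c - 1) < x"
    using assms by (simp_all add: log_le_iff less_log_iff)
  moreover have "2 powr (real_of_int c - 1) = 2 powr c / 2"
    by (simp add: powr_diff)
  ultimately show "1/2 < pnorm x" "pnorm x \<le> 1"
    unfolding pnorm_def c_def[symmetric] by (simp_all add: field_simps)
qed

lemma pnorm_eq_self:
  assumes "1/2 < y" "y \<le> 1"
  shows "pnorm y = y"
proof -
  have "log 2 y \<le> 0" and "-1 < log 2 y"
    using assms by (simp_all add: less_log_iff)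
  then have "\<lceil>log 2 y\<rceil> = 0"
    by (simp add: ceiling_eq_iff)
  then show ?thesis
    by (simp add: pnorm_def)
qed

lemma pnorm_eq_mult_2_power:
  fixes k :: nat
  assumes "1/2 < 2^k * y" "2^k * y \<le> 1"
  shows "pnorm y = 2^k * y"
proof -
  have "2^k * y > 0"
    using assms(1) by linarith
  then have "pnorm ((2^k * y) * 2 powr real_of_int (- int k)) = pnorm (2^k * y)"
    by (rule pnorm_mult_2_powr_int)
  moreover have "(2^k * y) * 2 powr real_of_int (- int k) = y"
    by (simp add: powr_minus powr_realpow)
  ultimately have "pnorm y = pnorm (2^k * y)"
    by metis
  with assms show ?thesis
    by (simp add: pnorm_eq_self)
qed

lemma sqrt2_bounds: "7/5 < sqrt (2::real)" "sqrt (2::real) < 3/2"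
proof -
  show "7/5 < sqrt (2::real)"
    by (rule real_less_rsqrt) (simp add: power2_eq_square)
  have "sqrt (2::real) < sqrt ((3/2)^2)"
    by (subst real_sqrt_less_iff) (simp add: power2_eq_square)
  then show "sqrt (2::real) < 3/2"
    by simp
qed

lemma wr_eq_pnorm_mult_2_powr:
  assumes "i > 0"
  shows "wr i r = (sqrt 2 - 1) * pnorm (real i) * 2 powr (\<lceil>log 2 (real i)\<rceil> - real r / 2)"
proof -
  have "2 powr (\<lceil>log 2 (real i)\<rceil> - real r / 2) = 2 powr (- real r / 2) * 2 powr \<lceil>log 2 (real i)\<rceil>"
    by (subst powr_add[symmetric]) simp
  then show ?thesis
    using assms by (simp add: wr_def pnorm_def)
qed

lemma pr_Suc_double:
  assumes "i > 0"
  shows "pr i (Suc (2*m)) = pnorm ((2 - sqrt 2) * pnorm (real i))"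
proof -
  define c where "c = \<lceil>log 2 (real i)\<rceil> - int m - 1"
  have "real_of_int \<lceil>log 2 (real i)\<rceil> - real (Suc (2*m)) / 2 = 1/2 + real_of_int c"
    by (simp add: c_def field_simps)
  then have "wr i (Suc (2*m)) = (sqrt 2 - 1) * pnorm (real i) * (2 powr (1/2) * 2 powr c)"
    by (simp add: wr_eq_pnorm_mult_2_powr[OF assms] powr_add)
  also have "\<dots> = ((2 - sqrt 2) * pnorm (real i)) * 2 powr c"
    by (simp add: powr_half_sqrt algebra_simps)
  finally show ?thesis
    using pnorm_mult_2_powr_int[of "(2 - sqrt 2) * pnorm (real i)" c]
      pnorm_bounds(1)[of "real i"] sqrt2_bounds assms
    by (simp add: pr_def)
qed

lemma pr_Suc_Suc_double:
  assumes "i > 0"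
  shows "pr i (Suc (Suc (2*m))) = pnorm ((sqrt 2 - 1) * pnorm (real i))"
proof -
  define c where "c = \<lceil>log 2 (real i)\<rceil> - int m - 1"
  have "real_of_int \<lceil>log 2 (real i)\<rceil> - real (Suc (Suc (2*m))) / 2 = real_of_int c"
    by (simp add: c_def field_simps)
  then have "wr i (Suc (Suc (2*m))) = ((sqrt 2 - 1) * pnorm (real i)) * 2 powr c"
    by (simp add: wr_eq_pnorm_mult_2_powr[OF assms])
  then show ?thesis
    using pnorm_mult_2_powr_int[of "(sqrt 2 - 1) * pnorm (real i)" c]
      pnorm_bounds(1)[of "real i"] sqrt2_bounds assms
    by (simp add: pr_def)
qed

lemma pnorm_two_minus_sqrt2_mult:
  assumes "1/2 < p" "p \<le> 1"
  shows "pnorm ((2 - sqrt 2) * p) =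
    (if p \<le> (2 + sqrt 2)/4 then 2 * (2 - sqrt 2) * p else (2 - sqrt 2) * p)"
proof -
  have a: "2 - sqrt 2 > 0" "2 - sqrt 2 < 1" "(2 - sqrt 2) * (2 + sqrt 2) = 2"
    using sqrt2_bounds by (simp_all add: algebra_simps)
  show ?thesis
  proof (cases "p \<le> (2 + sqrt 2)/4")
    case True
    have "2 * ((2 - sqrt 2) * p) \<le> 2 * ((2 - sqrt 2) * ((2 + sqrt 2)/4))"
      using True a by (intro mult_left_mono) auto
    moreover have "2 * ((2 - sqrt 2) * (1/2)) < 2 * ((2 - sqrt 2) * p)"
      using assms a by (intro mult_strict_left_mono) auto
    ultimately have "pnorm ((2 - sqrt 2) * p) = 2^1 * ((2 - sqrt 2) * p)"
      using a sqrt2_bounds by (intro pnorm_eq_mult_2_power) auto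
    with True show ?thesis
      by simp
  next
    case False
    have "(2 - sqrt 2) * ((2 + sqrt 2)/4) < (2 - sqrt 2) * p"
      using False a by (intro mult_strict_left_mono) auto
    moreover have "(2 - sqrt 2) * p \<le> 1"
      using mult_left_le[OF assms(2), of "2 - sqrt 2"] a by linarith
    ultimately have "pnorm ((2 - sqrt 2) * p) = 2^0 * ((2 - sqrt 2) * p)"
      using a by (intro pnorm_eq_mult_2_power) auto
    with False show ?thesis
      by simp
  qed
qed

lemma pnorm_sqrt2_minus_one_mult:
  assumes "1/2 < p" "p \<le> 1"
  shows "pnorm ((sqrt 2 - 1) * p) =
    (if p \<le> (1 + sqrt 2)/4 then 4 * (sqrt 2 - 1) * p else 2 * (sqrt 2 - 1) * p)"
proof -
  have a: "sqrt 2 - 1 > 0" "sqrt 2 - 1 < 1/2" "(sqrt 2 - 1) * (1 + sqrt 2) = 1"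
    using sqrt2_bounds by (simp_all add: algebra_simps)
  show ?thesis
  proof (cases "p \<le> (1 + sqrt 2)/4")
    case True
    have "4 * ((sqrt 2 - 1) * p) \<le> 4 * ((sqrt 2 - 1) * ((1 + sqrt 2)/4))"
      using True a by (intro mult_left_mono) auto
    moreover have "4 * ((sqrt 2 - 1) * (1/2)) < 4 * ((sqrt 2 - 1) * p)"
      using assms a by (intro mult_strict_left_mono) auto
    ultimately have "pnorm ((sqrt 2 - 1) * p) = 2^2 * ((sqrt 2 - 1) * p)"
      using a sqrt2_bounds by (intro pnorm_eq_mult_2_power) auto
    with True show ?thesis
      by simp
  next
    case False
    have "2 * ((sqrt 2 - 1) * ((1 + sqrt 2)/4)) < 2 * ((sqrt 2 - 1) * p)"
      using False a by (intro mult_strict_left_mono) auto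
    moreover have "(sqrt 2 - 1) * p \<le> 1/2"
      using mult_left_le[OF assms(2), of "sqrt 2 - 1"] a by linarith
    ultimately have "pnorm ((sqrt 2 - 1) * p) = 2^1 * ((sqrt 2 - 1) * p)"
      using a by (intro pnorm_eq_mult_2_power) auto
    with False show ?thesis
      by simp
  qed
qed

lemma inverse_pnorm_two_minus_sqrt2_mult:
  assumes "1/2 < p" "p \<le> 1"
  shows "1 / pnorm ((2 - sqrt 2) * p) =
    (if p \<le> (2 + sqrt 2)/4 then (2 + sqrt 2)/4 else (2 + sqrt 2)/2) / p"
proof -
  have "(2 - sqrt 2) * (2 + sqrt 2) = 2" "2 - sqrt 2 \<noteq> 0"
    using sqrt2_bounds by (simp_all add: algebra_simps)
  then show ?thesis
    unfolding pnorm_two_minus_sqrt2_mult[OF assms] using assms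
    by (simp add: field_simps)
qed

lemma inverse_pnorm_sqrt2_minus_one_mult:
  assumes "1/2 < p" "p \<le> 1"
  shows "1 / pnorm ((sqrt 2 - 1) * p) =
    (if p \<le> (1 + sqrt 2)/4 then (1 + sqrt 2)/4 else (1 + sqrt 2)/2) / p"
proof -
  have "(sqrt 2 - 1) * (1 + sqrt 2) = 1" "sqrt 2 - 1 \<noteq> 0"
    using sqrt2_bounds by (simp_all add: algebra_simps)
  then show ?thesis
    unfolding pnorm_sqrt2_minus_one_mult[OF assms] using assms
    by (simp add: field_simps)
qed

lemma Er_alternating:
  assumes odd: "\<And>m. f (Suc (2*m)) = a" and even: "\<And>m. f (Suc (Suc (2*m))) = b"
  shows "Er f = (2*a + b) / 3"
proof -
  have f_Suc: "f (Suc r) = (a + b)/2 + (a - b)/2 * (-1)^r" for r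
    by (cases "even r") (auto elim!: evenE oddE simp: odd even, simp_all add: field_simps)
  have minus_half_power: "(-1/2::real)^r = (-1)^r * (1/2)^r" for r
    by (simp flip: power_mult_distrib)
  have terms: "(1/2)^Suc r * f (Suc r) = (a + b)/4 * (1/2)^r + (a - b)/4 * (-1/2)^r" for r
    unfolding f_Suc minus_half_power by (simp add: field_simps)
  have "(\<lambda>r. (1/2)^Suc r * f (Suc r)) sums ((a + b)/4 * 2 + (a - b)/4 * (2/3))"
    unfolding terms using geometric_sums[of "1/2::real"] geometric_sums[of "-1/2::real"]
    by (intro sums_add sums_mult) simp_all
  also have "(a + b)/4 * 2 + (a - b)/4 * (2/3) = (2*a + b) / 3"
    by (simp add: field_simps)
  finally show ?thesis
    unfolding Er_def by (rule sums_unique[symmetric])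
qed

lemma Er_inverse_pr:
  assumes "i > 0"
  defines "p \<equiv> pnorm (real i)"
  defines "u \<equiv> (if p \<le> (2 + sqrt 2)/4 then (2 + sqrt 2)/4 else (2 + sqrt 2)/2) / p"
    and "v \<equiv> (if p \<le> (1 + sqrt 2)/4 then (1 + sqrt 2)/4 else (1 + sqrt 2)/2) / p"
  shows "Er (\<lambda>r. 1 / pr i r) = (2*u + v) / 3"
    and "Er (\<lambda>r. 1 / (pr i r)^2) = (2*u^2 + v^2) / 3"
proof -
  have p: "1/2 < p" "p \<le> 1"
    using pnorm_bounds assms(1) unfolding p_def by simp_all
  have odd: "1 / pr i (Suc (2*m)) = u" and even: "1 / pr i (Suc (Suc (2*m))) = v" for m
    using pr_Suc_double[OF assms(1)] pr_Suc_Suc_double[OF assms(1)]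
      inverse_pnorm_two_minus_sqrt2_mult[OF p] inverse_pnorm_sqrt2_minus_one_mult[OF p]
    by (simp_all add: p_def u_def v_def)
  show "Er (\<lambda>r. 1 / pr i r) = (2*u + v) / 3"
    by (rule Er_alternating) (simp_all add: odd even)
  show "Er (\<lambda>r. 1 / (pr i r)^2) = (2*u^2 + v^2) / 3"
    using odd even by (intro Er_alternating) (metis power_one_over)+
qed

theorem lemma4:
  fixes i :: nat
  assumes "even i" and "i \<ge> 4"
  defines "p \<equiv> pnorm (real i)"
  shows "(1/2 < p \<and> p \<le> (1 + sqrt 2)/4 \<longrightarrow>
            Er (\<lambda>r. 1 / pr i r) = (3 * sqrt 2 + 5) / (12 * p) \<and>
            Er (\<lambda>r. 1 / (pr i r)^2) = 5 * (3 + 2 * sqrt 2) / (48 * p^2))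
       \<and> ((1 + sqrt 2)/4 < p \<and> p \<le> (2 + sqrt 2)/4 \<longrightarrow>
            Er (\<lambda>r. 1 / pr i r) = (3 + 2 * sqrt 2) / (6 * p) \<and>
            Er (\<lambda>r. 1 / (pr i r)^2) = (3 + 2 * sqrt 2) / (6 * p^2))
       \<and> ((2 + sqrt 2)/4 < p \<and> p \<le> 1 \<longrightarrow>
            Er (\<lambda>r. 1 / pr i r) = (3 * sqrt 2 + 5) / (6 * p) \<and>
            Er (\<lambda>r. 1 / (pr i r)^2) = 5 * (3 + 2 * sqrt 2) / (12 * p^2))"
proof -
  have "i > 0"
    using assms(2) by simp
  then have "p > 0"
    using pnorm_bounds(1)[of "real i"] unfolding p_def by simp
  then show ?thesis
    using Er_inverse_pr[OF \<open>i > 0\<close>, folded p_def] sqrt2_bounds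
    by (auto simp: field_simps power2_eq_square)
qed

end
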